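(* Let $I_1,I_2,I_3\ge2$ and $R\ge1$. If the real $R$-term CPD of $I_1\times I_2\times I_3$ tensors is generically unique, then the $R$-term additive polynomial model $(\mu_R,\Theta_1^R)$ with $\Theta_1=\mathbb{R}^{I_1+I_2+I_3-2}$ and base map $$\mu_1(\lambda,\underline{\mathbf{a}},\underline{\mathbf{b}},\underline{\mathbf{c}})=\mathrm{vec}\Big(\lambda\begin{bmatrix}\underline{\mathbf{a}}\\1\end{bmatrix}\circ\begin{bmatrix}\underline{\mathbf{b}}\\1\end{bmatrix}\circ\begin{bmatrix}\underline{\mathbf{c}}\\1\end{bmatrix}\Big),\qquad \lambda\in\mathbb{R},\ \underline{\mathbf{a}}\in\mathbb{R}^{I_1-1},\ \underline{\mathbf{b}}\in\mathbb{R}^{I_2-1},\ \underline{\mathbf{c}}\in\mathbb{R}^{I_3-1},$$ is identifiable.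
   Context: Generic uniqueness of the real $R$-term CPD: for all $(\boldsymbol\lambda,\mathbf{A},\mathbf{B},\mathbf{C})\in\mathbb{R}^R\times\mathbb{R}^{I_1\times R}\times\mathbb{R}^{I_2\times R}\times\mathbb{R}^{I_3\times R}$ outside a Lebesgue-null set, every other $R$-term decomposition of $\sum_r\lambda_r\mathbf{a}_r\circ\mathbf{b}_r\circ\mathbf{c}_r$ is obtained by permutation of terms and rescaling of the factors within each term. Additive model: given a base polynomial map $\mu_1:\Theta_1\to\mathbb{R}^S$, the $R$-term model is $\mu_R(\theta_1,\dots,\theta_R)=\mu_1(\theta_1)+\cdots+\mu_1(\theta_R)$ on $\Theta_1^R$. It is identifiable if for all $\theta\in\Theta_1^R$ outside a Lebesgue-null set, every $\theta'\in\Theta_1^R$ with $\mu_R(\theta')=\mu_R(\theta)$ is obtained from $\theta$ by permuting the blocks $\theta_r$ and replacing blocks by $\theta'_r$ with $\mu_1(\theta'_r)=\mu_1(\theta_r)$. *)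

theory Defs
  imports "HOL-Analysis.Analysis"
begin

text \<open>Coordinates of a CPD parameter (lambda, A, B, C):
  Lam r = lambda_r, FA i r = A(i,r), FB j r = B(j,r), FC k r = C(k,r).\<close>
datatype cpd_idx = Lam nat | FA nat nat | FB nat nat | FC nat nat

definition cpd_index :: "nat \<Rightarrow> nat \<Rightarrow> nat \<Rightarrow> nat \<Rightarrow> cpd_idx set" where
  "cpd_index I1 I2 I3 R =
     Lam ` {..<R}
   \<union> (\<lambda>(i, r). FA i r) ` ({..<I1} \<times> {..<R})
   \<union> (\<lambda>(j, r). FB j r) ` ({..<I2} \<times> {..<R})
   \<union> (\<lambda>(k, r). FC k r) ` ({..<I3} \<times> {..<R})"

definition cpd_measure :: "nat \<Rightarrow> nat \<Rightarrow> nat \<Rightarrow> nat \<Rightarrow> (cpd_idx \<Rightarrow> real) measure" where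
  "cpd_measure I1 I2 I3 R = PiM (cpd_index I1 I2 I3 R) (\<lambda>_. lborel)"

definition cpd_tensor :: "nat \<Rightarrow> (cpd_idx \<Rightarrow> real) \<Rightarrow> nat \<Rightarrow> nat \<Rightarrow> nat \<Rightarrow> real" where
  "cpd_tensor R p i j k = (\<Sum>r<R. p (Lam r) * p (FA i r) * p (FB j r) * p (FC k r))"

definition cpd_perm_scale :: "nat \<Rightarrow> nat \<Rightarrow> nat \<Rightarrow> nat \<Rightarrow> (cpd_idx \<Rightarrow> real) \<Rightarrow> (cpd_idx \<Rightarrow> real) \<Rightarrow> bool" where
  "cpd_perm_scale I1 I2 I3 R p p' \<longleftrightarrow>
     (\<exists>\<sigma>. \<sigma> permutes {..<R} \<and>
        (\<forall>r<R. \<exists>\<delta> \<alpha> \<beta> \<gamma> :: real. \<delta> * \<alpha> * \<beta> * \<gamma> = 1 \<and>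
            p' (Lam (\<sigma> r)) = \<delta> * p (Lam r) \<and>
            (\<forall>i<I1. p' (FA i (\<sigma> r)) = \<alpha> * p (FA i r)) \<and>
            (\<forall>j<I2. p' (FB j (\<sigma> r)) = \<beta> * p (FB j r)) \<and>
            (\<forall>k<I3. p' (FC k (\<sigma> r)) = \<gamma> * p (FC k r))))"

definition cpd_generically_unique :: "nat \<Rightarrow> nat \<Rightarrow> nat \<Rightarrow> nat \<Rightarrow> bool" where
  "cpd_generically_unique I1 I2 I3 R \<longleftrightarrow>
     (AE p in cpd_measure I1 I2 I3 R.
        \<forall>p' \<in> space (cpd_measure I1 I2 I3 R).
          (\<forall>i<I1. \<forall>j<I2. \<forall>k<I3. cpd_tensor R p' i j k = cpd_tensor R p i j k)
          \<longrightarrow> cpd_perm_scale I1 I2 I3 R p p')"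

text \<open>Base map mu1 : R^d -> R^S (vectors represented as functions on {..<d}, {..<S});
  the R-term parameter theta in (R^d)^R is a function on {..<R} x {..<d},
  block r being (\<lambda>k. theta (r,k)).\<close>
definition additive_identifiable :: "nat \<Rightarrow> nat \<Rightarrow> nat \<Rightarrow> ((nat \<Rightarrow> real) \<Rightarrow> (nat \<Rightarrow> real)) \<Rightarrow> bool" where
  "additive_identifiable d S R mu1 \<longleftrightarrow>
     (AE \<theta> in PiM ({..<R} \<times> {..<d}) (\<lambda>_. lborel).
        \<forall>\<theta>' \<in> space (PiM ({..<R} \<times> {..<d}) (\<lambda>_. lborel)).
          (\<forall>s<S. (\<Sum>r<R. mu1 (\<lambda>k. \<theta>' (r, k)) s) = (\<Sum>r<R. mu1 (\<lambda>k. \<theta> (r, k)) s))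
          \<longrightarrow> (\<exists>\<sigma>. \<sigma> permutes {..<R} \<and>
                (\<forall>r<R. \<forall>s<S. mu1 (\<lambda>k. \<theta>' (\<sigma> r, k)) s = mu1 (\<lambda>k. \<theta> (r, k)) s)))"

definition ext1 :: "nat \<Rightarrow> (nat \<Rightarrow> real) \<Rightarrow> nat \<Rightarrow> real" where
  "ext1 n v i = (if i < n - 1 then v i else 1)"

text \<open>theta1 in R^(I1+I2+I3-2) laid out as
  (lambda, a_0..a_(I1-2), b_0..b_(I2-2), c_0..c_(I3-2));
  output vec(T) with vec index s = i + I1*j + I1*I2*k (column-major).\<close>
definition cpd_base_map :: "nat \<Rightarrow> nat \<Rightarrow> nat \<Rightarrow> (nat \<Rightarrow> real) \<Rightarrow> nat \<Rightarrow> real" where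
  "cpd_base_map I1 I2 I3 t s =
     (let i = s mod I1; j = (s div I1) mod I2; k = s div (I1 * I2);
          lam = t 0;
          a = (\<lambda>q. t (1 + q));
          b = (\<lambda>q. t (I1 + q));
          c = (\<lambda>q. t (I1 + I2 - 1 + q))
      in lam * ext1 I1 a i * ext1 I2 b j * ext1 I3 c k)"

end

theory Submission
  imports Defs
begin

text \<open>Call the last entries of the CPD factor vectors, which the model fixes to 1, the anchor
  coordinates. By Fubini, generic uniqueness of the CPD yields anchor values \<open>y\<close>, all nonzero,
  such that almost every choice of the remaining free coordinates gives a CPD with unique
  decomposition. Rescaling the free coordinates by the anchor values is a diagonal linear
  bijection, so it preserves null sets, and it turns almost every model parameter \<open>\<theta>\<close> into such a
  CPD whose \<open>r\<close>-th rank-one term is exactly \<open>mu1(\<theta>_r)\<close>. If \<open>mu_R(\<theta>') = mu_R(\<theta>)\<close>, then \<open>\<theta>'\<close>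
  with anchors 1 is a second decomposition of the same tensor; uniqueness permutes and rescales
  its terms, and rescaling within a term does not change the rank-one tensor \<open>mu1(\<theta>'_r)\<close>.\<close>

section \<open>Almost everywhere on finite products of Lebesgue measure\<close>

lemma AE_PiM_merge:
  fixes M :: "'a measure"
  assumes "sigma_finite_measure M" and "finite S" "finite T" "S \<inter> T = {}"
    and "AE p in PiM (S \<union> T) (\<lambda>_. M). P p"
  shows "AE y in PiM S (\<lambda>_. M). AE x in PiM T (\<lambda>_. M). P (merge S T (y, x))"
proof -
  interpret product_sigma_finite "\<lambda>_. M"
    using assms(1) by (simp add: product_sigma_finite_def)
  interpret S: finite_product_sigma_finite "\<lambda>_. M" S by standard fact
  interpret T: finite_product_sigma_finite "\<lambda>_. M" T by standard fact
  interpret pair_sigma_finite "PiM S (\<lambda>_. M)" "PiM T (\<lambda>_. M)" ..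
  have "AE z in distr (PiM S (\<lambda>_. M) \<Otimes>\<^sub>M PiM T (\<lambda>_. M)) (PiM (S \<union> T) (\<lambda>_. M)) (merge S T). P z"
    unfolding distr_merge[OF assms(4,2,3)] by (rule assms(5))
  then have "AE z in PiM S (\<lambda>_. M) \<Otimes>\<^sub>M PiM T (\<lambda>_. M). P (merge S T z)"
    by (rule AE_distrD[OF measurable_merge])
  then show ?thesis by (rule AE_pair)
qed

lemma AE_PiM_lborel_nonzero:
  assumes "finite S"
  shows "AE y in PiM S (\<lambda>_. lborel :: real measure). \<forall>\<tau>\<in>S. y \<tau> \<noteq> 0"
proof -
  interpret product_sigma_finite "\<lambda>_. lborel :: real measure" ..
  have "AE y in PiM S (\<lambda>_. lborel :: real measure). y \<tau> \<noteq> 0" if "\<tau> \<in> S" for \<tau>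
  proof (rule AE_I')
    let ?N = "\<Pi>\<^sub>E \<sigma>\<in>S. if \<sigma> = \<tau> then {0 :: real} else UNIV"
    have "emeasure (PiM S (\<lambda>_. lborel)) ?N = (\<Prod>\<sigma>\<in>S. emeasure lborel (if \<sigma> = \<tau> then {0 :: real} else UNIV))"
      using assms by (intro emeasure_PiM) auto
    also have "\<dots> = 0" using that assms by (intro prod_zero) auto
    finally show "?N \<in> null_sets (PiM S (\<lambda>_. lborel))"
      using assms by (auto intro!: sets_PiM_I_finite)
    show "{y \<in> space (PiM S (\<lambda>_. lborel)). \<not> y \<tau> \<noteq> 0} \<subseteq> ?N"
      by (auto simp: space_PiM PiE_iff extensional_def)
  qed
  then show ?thesis using assms by (simp add: AE_finite_all)
qed

lemma AE_PiM_lborel_imp_ex: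
  assumes "finite S" and "AE y in PiM S (\<lambda>_. lborel :: real measure). P y"
  shows "\<exists>y. P y"
proof (rule eventually_happens')
  interpret product_sigma_finite "\<lambda>_. lborel :: real measure" ..
  have "emeasure (PiM S (\<lambda>_. lborel)) (\<Pi>\<^sub>E \<sigma>\<in>S. (UNIV :: real set)) \<noteq> 0"
    using assms(1) by (subst emeasure_PiM) auto
  then show "ae_filter (PiM S (\<lambda>_. lborel :: real measure)) \<noteq> bot"
    by (simp add: ae_filter_eq_bot_iff space_PiM)
qed fact

lemma emeasure_lborel_vimage_mult:
  fixes c :: real
  assumes "c \<noteq> 0" and "A \<in> sets borel"
  shows "emeasure lborel ((*) c -` A) = ennreal (inverse \<bar>c\<bar>) * emeasure lborel A"
proof -
  have "emeasure lborel ((*) c -` A) = emeasure (distr lborel borel ((*) c)) A"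
    using assms(2) by (subst emeasure_distr) auto
  also have "\<dots> = ennreal (inverse \<bar>c\<bar>) * emeasure lborel A"
    using assms by (simp add: lborel_distr_mult emeasure_density_const)
  finally show ?thesis .
qed

lemma vimage_scale_reindex_PiE:
  fixes c :: "'i \<Rightarrow> real" and e :: "'i \<Rightarrow> 'j"
  assumes e: "bij_betw e I J"
  shows "(\<lambda>\<theta>. \<lambda>i\<in>I. c i * \<theta> (e i)) -` Pi\<^sub>E I A \<inter> space (PiM J (\<lambda>_. lborel))
       = (\<Pi>\<^sub>E j\<in>J. (*) (c (inv_into I e j)) -` A (inv_into I e j))"
proof -
  have J: "J = e ` I" using bij_betw_imp_surj_on[OF e] by simp
  have "\<theta> \<in> (\<Pi> j\<in>J. (*) (c (inv_into I e j)) -` A (inv_into I e j))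
    \<longleftrightarrow> (\<forall>i\<in>I. c i * \<theta> (e i) \<in> A i)" for \<theta>
    unfolding J by (auto simp: Pi_iff bij_betw_inv_into_left[OF e])
  then show ?thesis
    unfolding set_eq_iff by (simp add: space_PiM restrict_PiE_iff PiE_iff Pi_iff)
qed

lemma measurable_scale_reindex:
  fixes c :: "'i \<Rightarrow> real" and e :: "'i \<Rightarrow> 'j"
  assumes "e ` I \<subseteq> J"
  shows "(\<lambda>\<theta>. \<lambda>i\<in>I. c i * \<theta> (e i)) \<in> PiM J (\<lambda>_. lborel) \<rightarrow>\<^sub>M PiM I (\<lambda>_. lborel)"
  using assms
  by (intro measurable_restrict borel_measurable_times measurable_const
      measurable_PiM_component_rev) auto

lemma distr_PiM_lborel_scale_reindex:
  fixes c :: "'i \<Rightarrow> real" and e :: "'i \<Rightarrow> 'j"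
  assumes "finite I" and e: "bij_betw e I J" and c: "\<And>i. i \<in> I \<Longrightarrow> c i \<noteq> 0"
  defines "F \<equiv> \<lambda>\<theta>. \<lambda>i\<in>I. c i * \<theta> (e i)"
  shows "distr (density (PiM J (\<lambda>_. lborel)) (\<lambda>_. \<Prod>i\<in>I. ennreal \<bar>c i\<bar>)) (PiM I (\<lambda>_. lborel)) F
       = PiM I (\<lambda>_. lborel)"
proof -
  interpret product_sigma_finite "\<lambda>_. lborel :: real measure" ..
  have "finite J" using e \<open>finite I\<close> bij_betw_finite by blast
  have F: "F \<in> PiM J (\<lambda>_. lborel) \<rightarrow>\<^sub>M PiM I (\<lambda>_. lborel)"
    unfolding F_def using bij_betw_imp_surj_on[OF e] by (intro measurable_scale_reindex) simp
  show ?thesis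
  proof (rule PiM_eqI[OF \<open>finite I\<close>])
    fix A :: "'i \<Rightarrow> real set" assume A: "\<And>i. i \<in> I \<Longrightarrow> A i \<in> sets lborel"
    let ?B = "\<lambda>j. (*) (c (inv_into I e j)) -` A (inv_into I e j)"
    have "(*) a -` X \<in> sets borel" if "X \<in> sets borel" for a :: real and X
      using measurable_sets_borel[of "(*) a" borel X] that by simp
    then have B: "?B j \<in> sets lborel" if "j \<in> J" for j
      using A[OF inv_into_into[of j e I]] that bij_betw_imp_surj_on[OF e] by auto
    have "emeasure lborel (?B (e i)) = ennreal (inverse \<bar>c i\<bar>) * emeasure lborel (A i)"
      if "i \<in> I" for i
      using that A c by (simp add: bij_betw_inv_into_left[OF e] emeasure_lborel_vimage_mult)
    then have "(\<Prod>j\<in>J. emeasure lborel (?B j))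
             = (\<Prod>i\<in>I. ennreal (inverse \<bar>c i\<bar>) * emeasure lborel (A i))"
      by (simp add: prod.reindex_bij_betw[OF e, symmetric])
    moreover have "ennreal \<bar>c i\<bar> * ennreal (inverse \<bar>c i\<bar>) = 1" if "i \<in> I" for i
      using c[OF that] by (simp flip: ennreal_mult)
    ultimately have "(\<Prod>i\<in>I. ennreal \<bar>c i\<bar>) * (\<Prod>j\<in>J. emeasure lborel (?B j))
                   = (\<Prod>i\<in>I. emeasure lborel (A i))"
      by (simp add: prod.distrib[symmetric] mult.assoc[symmetric])
    then show "emeasure (distr (density (PiM J (\<lambda>_. lborel)) (\<lambda>_. \<Prod>i\<in>I. ennreal \<bar>c i\<bar>))
                 (PiM I (\<lambda>_. lborel)) F) (Pi\<^sub>E I A) = (\<Prod>i\<in>I. emeasure lborel (A i))"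
      using F A B \<open>finite I\<close> \<open>finite J\<close>
      by (simp add: emeasure_distr sets_PiM_I_finite emeasure_density_const emeasure_PiM
          F_def vimage_scale_reindex_PiE[OF e])
  qed simp
qed

lemma AE_PiM_lborel_scale_reindex:
  fixes c :: "'i \<Rightarrow> real" and e :: "'i \<Rightarrow> 'j"
  assumes "finite I" and e: "bij_betw e I J" and c: "\<And>i. i \<in> I \<Longrightarrow> c i \<noteq> 0"
    and "AE x in PiM I (\<lambda>_. lborel). P x"
  shows "AE \<theta> in PiM J (\<lambda>_. lborel). P (\<lambda>i\<in>I. c i * \<theta> (e i))"
proof -
  let ?K = "\<Prod>i\<in>I. ennreal \<bar>c i\<bar>"
  have "(\<lambda>\<theta>. \<lambda>i\<in>I. c i * \<theta> (e i)) \<in> density (PiM J (\<lambda>_. lborel)) (\<lambda>_. ?K) \<rightarrow>\<^sub>M PiM I (\<lambda>_. lborel)"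
    using bij_betw_imp_surj_on[OF e] by (simp add: measurable_scale_reindex)
  moreover have "AE x in distr (density (PiM J (\<lambda>_. lborel)) (\<lambda>_. ?K)) (PiM I (\<lambda>_. lborel))
                    (\<lambda>\<theta>. \<lambda>i\<in>I. c i * \<theta> (e i)). P x"
    by (subst distr_PiM_lborel_scale_reindex[OF assms(1,2)]) (use assms(3,4) in auto)
  ultimately have "AE \<theta> in density (PiM J (\<lambda>_. lborel)) (\<lambda>_. ?K). P (\<lambda>i\<in>I. c i * \<theta> (e i))"
    by (rule AE_distrD)
  moreover have "0 < ?K" using c by (subst prod_ennreal) (auto intro!: prod_pos)
  ultimately show ?thesis by (simp add: AE_density)
qed

section \<open>Model parameters as CPD parameters\<close>

definition cpd_essentially_unique :: "nat \<Rightarrow> nat \<Rightarrow> nat \<Rightarrow> nat \<Rightarrow> (cpd_idx \<Rightarrow> real) \<Rightarrow> bool" where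
  "cpd_essentially_unique I1 I2 I3 R p \<longleftrightarrow>
     (\<forall>p' \<in> space (cpd_measure I1 I2 I3 R).
        (\<forall>i<I1. \<forall>j<I2. \<forall>k<I3. cpd_tensor R p' i j k = cpd_tensor R p i j k)
        \<longrightarrow> cpd_perm_scale I1 I2 I3 R p p')"

definition additive_unique_at ::
    "nat \<Rightarrow> nat \<Rightarrow> nat \<Rightarrow> ((nat \<Rightarrow> real) \<Rightarrow> (nat \<Rightarrow> real)) \<Rightarrow> (nat \<times> nat \<Rightarrow> real) \<Rightarrow> bool" where
  "additive_unique_at d S R mu1 \<theta> \<longleftrightarrow>
     (\<forall>\<theta>' \<in> space (PiM ({..<R} \<times> {..<d}) (\<lambda>_. lborel)).
        (\<forall>s<S. (\<Sum>r<R. mu1 (\<lambda>k. \<theta>' (r, k)) s) = (\<Sum>r<R. mu1 (\<lambda>k. \<theta> (r, k)) s))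
        \<longrightarrow> (\<exists>\<sigma>. \<sigma> permutes {..<R} \<and>
              (\<forall>r<R. \<forall>s<S. mu1 (\<lambda>k. \<theta>' (\<sigma> r, k)) s = mu1 (\<lambda>k. \<theta> (r, k)) s)))"

lemma cpd_generically_unique_iff:
  "cpd_generically_unique I1 I2 I3 R \<longleftrightarrow>
     (AE p in cpd_measure I1 I2 I3 R. cpd_essentially_unique I1 I2 I3 R p)"
  unfolding cpd_generically_unique_def cpd_essentially_unique_def ..

lemma additive_identifiable_iff:
  "additive_identifiable d S R mu1 \<longleftrightarrow>
     (AE \<theta> in PiM ({..<R} \<times> {..<d}) (\<lambda>_. lborel). additive_unique_at d S R mu1 \<theta>)"
  unfolding additive_identifiable_def additive_unique_at_def ..

lemma cpd_perm_scale_terms: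
  assumes "cpd_perm_scale I1 I2 I3 R p p'"
  obtains \<sigma> where "\<sigma> permutes {..<R}"
    and "\<And>r i j k. r < R \<Longrightarrow> i < I1 \<Longrightarrow> j < I2 \<Longrightarrow> k < I3 \<Longrightarrow>
           p' (Lam (\<sigma> r)) * p' (FA i (\<sigma> r)) * p' (FB j (\<sigma> r)) * p' (FC k (\<sigma> r))
         = p (Lam r) * p (FA i r) * p (FB j r) * p (FC k r)"
proof -
  obtain \<sigma> where \<sigma>: "\<sigma> permutes {..<R}"
    and scale: "\<forall>r<R. \<exists>\<delta> \<alpha> \<beta> \<gamma> :: real. \<delta> * \<alpha> * \<beta> * \<gamma> = 1 \<and>
            p' (Lam (\<sigma> r)) = \<delta> * p (Lam r) \<and>
            (\<forall>i<I1. p' (FA i (\<sigma> r)) = \<alpha> * p (FA i r)) \<and>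
            (\<forall>j<I2. p' (FB j (\<sigma> r)) = \<beta> * p (FB j r)) \<and>
            (\<forall>k<I3. p' (FC k (\<sigma> r)) = \<gamma> * p (FC k r))"
    using assms unfolding cpd_perm_scale_def by blast
  have "p' (Lam (\<sigma> r)) * p' (FA i (\<sigma> r)) * p' (FB j (\<sigma> r)) * p' (FC k (\<sigma> r))
      = p (Lam r) * p (FA i r) * p (FB j r) * p (FC k r)"
    if rijk: "r < R" "i < I1" "j < I2" "k < I3" for r i j k
  proof -
    obtain \<delta> \<alpha> \<beta> \<gamma> :: real where "\<delta> * \<alpha> * \<beta> * \<gamma> = 1"
      and "p' (Lam (\<sigma> r)) = \<delta> * p (Lam r)" "p' (FA i (\<sigma> r)) = \<alpha> * p (FA i r)"
          "p' (FB j (\<sigma> r)) = \<beta> * p (FB j r)" "p' (FC k (\<sigma> r)) = \<gamma> * p (FC k r)"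
      using scale rijk by blast
    then show ?thesis by (simp add: algebra_simps)
  qed
  then show ?thesis by (rule that[OF \<sigma>])
qed

lemma vec_index_less:
  fixes i j k I1 I2 I3 :: nat
  assumes "i < I1" "j < I2" "k < I3"
  shows "i + I1 * j + I1 * I2 * k < I1 * I2 * I3"
proof -
  have "i + I1 * j < I1 * (j + 1)" using assms by simp
  also have "\<dots> \<le> I1 * I2" using assms by (intro mult_left_mono) auto
  finally have "i + I1 * j + I1 * I2 * k < I1 * I2 * (k + 1)" by simp
  also have "\<dots> \<le> I1 * I2 * I3" using assms by (intro mult_left_mono) auto
  finally show ?thesis .
qed

lemma vec_index_cases:
  fixes s I1 I2 I3 :: nat
  assumes "s < I1 * I2 * I3"
  obtains i j k where "i < I1" "j < I2" "k < I3" "s = i + I1 * j + I1 * I2 * k"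
proof
  have pos: "0 < I1" "0 < I2" using assms by (auto intro: Nat.gr0I)
  show "s mod I1 < I1" "(s div I1) mod I2 < I2" using pos by auto
  show "s div (I1 * I2) < I3"
    using assms pos by (simp add: div_less_iff_less_mult mult.commute mult.left_commute)
  have "s = s mod I1 + I1 * (s div I1)" by simp
  also have "s div I1 = (s div I1) mod I2 + I2 * (s div (I1 * I2))"
    by (simp add: div_mult2_eq)
  finally show "s = s mod I1 + I1 * ((s div I1) mod I2) + I1 * I2 * (s div (I1 * I2))"
    by (simp add: algebra_simps)
qed

lemma cpd_base_map_vec_index:
  assumes "i < I1" "j < I2"
  shows "cpd_base_map I1 I2 I3 t (i + I1 * j + I1 * I2 * k) =
    t 0 * ext1 I1 (\<lambda>q. t (1 + q)) i * ext1 I2 (\<lambda>q. t (I1 + q)) j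
        * ext1 I3 (\<lambda>q. t (I1 + I2 - 1 + q)) k"
proof -
  have s: "i + I1 * j + I1 * I2 * k = i + I1 * (j + I2 * k)" by (simp add: algebra_simps)
  have "(i + I1 * j + I1 * I2 * k) div I1 = j + I2 * k" unfolding s using assms by simp
  moreover have "(j + I2 * k) div I2 = k" using assms by simp
  ultimately show ?thesis
    using assms unfolding cpd_base_map_def Let_def s by (simp add: div_mult2_eq)
qed

lemma mem_cpd_index [simp]:
  "Lam r \<in> cpd_index I1 I2 I3 R \<longleftrightarrow> r < R"
  "FA i r \<in> cpd_index I1 I2 I3 R \<longleftrightarrow> i < I1 \<and> r < R"
  "FB j r \<in> cpd_index I1 I2 I3 R \<longleftrightarrow> j < I2 \<and> r < R"
  "FC k r \<in> cpd_index I1 I2 I3 R \<longleftrightarrow> k < I3 \<and> r < R"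
  by (auto simp: cpd_index_def)

definition cpd_anchor_index :: "nat \<Rightarrow> nat \<Rightarrow> nat \<Rightarrow> nat \<Rightarrow> cpd_idx set" where
  "cpd_anchor_index I1 I2 I3 R =
     FA (I1 - 1) ` {..<R} \<union> FB (I2 - 1) ` {..<R} \<union> FC (I3 - 1) ` {..<R}"

lemma mem_cpd_anchor_index [simp]:
  "Lam r \<notin> cpd_anchor_index I1 I2 I3 R"
  "FA i r \<in> cpd_anchor_index I1 I2 I3 R \<longleftrightarrow> i = I1 - 1 \<and> r < R"
  "FB j r \<in> cpd_anchor_index I1 I2 I3 R \<longleftrightarrow> j = I2 - 1 \<and> r < R"
  "FC k r \<in> cpd_anchor_index I1 I2 I3 R \<longleftrightarrow> k = I3 - 1 \<and> r < R"
  by (auto simp: cpd_anchor_index_def)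

lemma cpd_anchor_index_subset:
  "0 < I1 \<Longrightarrow> 0 < I2 \<Longrightarrow> 0 < I3 \<Longrightarrow> cpd_anchor_index I1 I2 I3 R \<subseteq> cpd_index I1 I2 I3 R"
  by (auto simp: cpd_anchor_index_def)

text \<open>The CPD parameter whose \<open>r\<close>-th term is \<open>mu1(\<theta>_r)\<close>, but with the last entries of the
  factor vectors equal to the anchor values of \<open>y\<close> instead of 1; \<open>\<lambda>_r\<close> compensates.\<close>
definition cpd_param_of_model ::
    "nat \<Rightarrow> nat \<Rightarrow> nat \<Rightarrow> nat \<Rightarrow> (cpd_idx \<Rightarrow> real) \<Rightarrow> (nat \<times> nat \<Rightarrow> real) \<Rightarrow> cpd_idx \<Rightarrow> real" where
  "cpd_param_of_model I1 I2 I3 R y \<theta> = (\<lambda>\<tau>\<in>cpd_index I1 I2 I3 R. case \<tau> of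
       Lam r \<Rightarrow> \<theta> (r, 0) / (y (FA (I1 - 1) r) * y (FB (I2 - 1) r) * y (FC (I3 - 1) r))
     | FA i r \<Rightarrow> y (FA (I1 - 1) r) * ext1 I1 (\<lambda>q. \<theta> (r, 1 + q)) i
     | FB j r \<Rightarrow> y (FB (I2 - 1) r) * ext1 I2 (\<lambda>q. \<theta> (r, I1 + q)) j
     | FC k r \<Rightarrow> y (FC (I3 - 1) r) * ext1 I3 (\<lambda>q. \<theta> (r, I1 + I2 - 1 + q)) k)"

lemma cpd_param_of_model_term:
  fixes \<theta> :: "nat \<times> nat \<Rightarrow> real"
  assumes y: "\<forall>\<tau>\<in>cpd_anchor_index I1 I2 I3 R. y \<tau> \<noteq> 0"
    and "r < R" "i < I1" "j < I2" "k < I3"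
  defines "p \<equiv> cpd_param_of_model I1 I2 I3 R y \<theta>"
  shows "p (Lam r) * p (FA i r) * p (FB j r) * p (FC k r)
       = cpd_base_map I1 I2 I3 (\<lambda>q. \<theta> (r, q)) (i + I1 * j + I1 * I2 * k)"
proof -
  have "y (FA (I1 - 1) r) \<noteq> 0" "y (FB (I2 - 1) r) \<noteq> 0" "y (FC (I3 - 1) r) \<noteq> 0"
    using y \<open>r < R\<close> by (auto simp: cpd_anchor_index_def)
  then show ?thesis
    unfolding cpd_base_map_vec_index[OF \<open>i < I1\<close> \<open>j < I2\<close>]
    using assms(2-) by (simp add: p_def cpd_param_of_model_def field_simps)
qed

lemma cpd_tensor_cpd_param_of_model:
  assumes y: "\<forall>\<tau>\<in>cpd_anchor_index I1 I2 I3 R. y \<tau> \<noteq> 0"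
    and "i < I1" "j < I2" "k < I3"
  shows "cpd_tensor R (cpd_param_of_model I1 I2 I3 R y \<theta>) i j k
       = (\<Sum>r<R. cpd_base_map I1 I2 I3 (\<lambda>q. \<theta> (r, q)) (i + I1 * j + I1 * I2 * k))"
  unfolding cpd_tensor_def using assms by (intro sum.cong refl cpd_param_of_model_term) auto

lemma additive_unique_at_if_cpd_essentially_unique:
  assumes y: "\<forall>\<tau>\<in>cpd_anchor_index I1 I2 I3 R. y \<tau> \<noteq> 0"
    and unique: "cpd_essentially_unique I1 I2 I3 R (cpd_param_of_model I1 I2 I3 R y \<theta>)"
  shows "additive_unique_at d (I1 * I2 * I3) R (cpd_base_map I1 I2 I3) \<theta>"
  unfolding additive_unique_at_def
proof (intro ballI impI)
  fix \<theta>' :: "nat \<times> nat \<Rightarrow> real"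
  assume sums: "\<forall>s<I1 * I2 * I3. (\<Sum>r<R. cpd_base_map I1 I2 I3 (\<lambda>k. \<theta>' (r, k)) s)
                                = (\<Sum>r<R. cpd_base_map I1 I2 I3 (\<lambda>k. \<theta> (r, k)) s)"
  define p where "p = cpd_param_of_model I1 I2 I3 R y \<theta>"
  define p' where "p' = cpd_param_of_model I1 I2 I3 R (\<lambda>_. 1) \<theta>'"
  have "p' \<in> space (cpd_measure I1 I2 I3 R)"
    by (simp add: p'_def cpd_param_of_model_def cpd_measure_def space_PiM)
  moreover have "cpd_tensor R p' i j k = cpd_tensor R p i j k"
    if "i < I1" "j < I2" "k < I3" for i j k
    using sums vec_index_less[OF that] y that
    by (simp add: p_def p'_def cpd_tensor_cpd_param_of_model)
  ultimately have "cpd_perm_scale I1 I2 I3 R p p'"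
    using unique by (auto simp: cpd_essentially_unique_def p_def)
  then obtain \<sigma> where \<sigma>: "\<sigma> permutes {..<R}"
    and terms: "\<And>r i j k. r < R \<Longrightarrow> i < I1 \<Longrightarrow> j < I2 \<Longrightarrow> k < I3 \<Longrightarrow>
           p' (Lam (\<sigma> r)) * p' (FA i (\<sigma> r)) * p' (FB j (\<sigma> r)) * p' (FC k (\<sigma> r))
         = p (Lam r) * p (FA i r) * p (FB j r) * p (FC k r)"
    using cpd_perm_scale_terms by blast
  have "cpd_base_map I1 I2 I3 (\<lambda>q. \<theta>' (\<sigma> r, q)) s = cpd_base_map I1 I2 I3 (\<lambda>q. \<theta> (r, q)) s"
    if r: "r < R" and s: "s < I1 * I2 * I3" for r s
  proof -
    obtain i j k where ijk: "i < I1" "j < I2" "k < I3" and s_eq: "s = i + I1 * j + I1 * I2 * k"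
      using vec_index_cases[OF s] .
    have "\<sigma> r < R" using permutes_in_image[OF \<sigma>] r by simp
    have "cpd_base_map I1 I2 I3 (\<lambda>q. \<theta>' (\<sigma> r, q)) s
        = p' (Lam (\<sigma> r)) * p' (FA i (\<sigma> r)) * p' (FB j (\<sigma> r)) * p' (FC k (\<sigma> r))"
      unfolding s_eq p'_def
      by (rule cpd_param_of_model_term[symmetric]) (simp_all add: \<open>\<sigma> r < R\<close> ijk)
    also have "\<dots> = p (Lam r) * p (FA i r) * p (FB j r) * p (FC k r)"
      by (rule terms[OF r ijk])
    also have "\<dots> = cpd_base_map I1 I2 I3 (\<lambda>q. \<theta> (r, q)) s"
      unfolding s_eq p_def by (rule cpd_param_of_model_term[OF y r ijk])
    finally show ?thesis .
  qed
  with \<sigma> show "\<exists>\<sigma>. \<sigma> permutes {..<R} \<and>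
      (\<forall>r<R. \<forall>s<I1 * I2 * I3. cpd_base_map I1 I2 I3 (\<lambda>k. \<theta>' (\<sigma> r, k)) s
                             = cpd_base_map I1 I2 I3 (\<lambda>k. \<theta> (r, k)) s)"
    by blast
qed

section \<open>Generic anchor values\<close>

definition cpd_free_pos :: "nat \<Rightarrow> nat \<Rightarrow> cpd_idx \<Rightarrow> nat \<times> nat" where
  "cpd_free_pos I1 I2 \<tau> = (case \<tau> of
       Lam r \<Rightarrow> (r, 0) | FA i r \<Rightarrow> (r, 1 + i) | FB j r \<Rightarrow> (r, I1 + j) | FC k r \<Rightarrow> (r, I1 + I2 - 1 + k))"

lemma bij_betw_cpd_free_pos:
  assumes "0 < I1" "0 < I2" "0 < I3"
  shows "bij_betw (cpd_free_pos I1 I2) (cpd_index I1 I2 I3 R - cpd_anchor_index I1 I2 I3 R)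
           ({..<R} \<times> {..<I1 + I2 + I3 - 2})"
proof (rule bij_betwI')
  fix \<tau> \<tau>' assume "\<tau> \<in> cpd_index I1 I2 I3 R - cpd_anchor_index I1 I2 I3 R"
    and "\<tau>' \<in> cpd_index I1 I2 I3 R - cpd_anchor_index I1 I2 I3 R"
  then show "cpd_free_pos I1 I2 \<tau> = cpd_free_pos I1 I2 \<tau>' \<longleftrightarrow> \<tau> = \<tau>'"
    using assms by (cases \<tau>; cases \<tau>') (auto simp: cpd_free_pos_def)
next
  fix \<tau> assume "\<tau> \<in> cpd_index I1 I2 I3 R - cpd_anchor_index I1 I2 I3 R"
  then show "cpd_free_pos I1 I2 \<tau> \<in> {..<R} \<times> {..<I1 + I2 + I3 - 2}"
    using assms by (cases \<tau>) (auto simp: cpd_free_pos_def)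
next
  fix z assume "z \<in> {..<R} \<times> {..<I1 + I2 + I3 - 2}"
  then obtain r q where z: "z = (r, q)" "r < R" "q < I1 + I2 + I3 - 2" by auto
  consider "q = 0" | "0 < q" "q < I1" | "I1 \<le> q" "q < I1 + I2 - 1" | "I1 + I2 - 1 \<le> q"
    by linarith
  then show "\<exists>\<tau>\<in>cpd_index I1 I2 I3 R - cpd_anchor_index I1 I2 I3 R. z = cpd_free_pos I1 I2 \<tau>"
  proof cases
    case 1 with z show ?thesis by (intro bexI[of _ "Lam r"]) (auto simp: cpd_free_pos_def)
  next
    case 2 with z show ?thesis by (intro bexI[of _ "FA (q - 1) r"]) (auto simp: cpd_free_pos_def)
  next
    case 3 with z show ?thesis by (intro bexI[of _ "FB (q - I1) r"]) (auto simp: cpd_free_pos_def)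
  next
    case 4 with z assms show ?thesis
      by (intro bexI[of _ "FC (q - (I1 + I2 - 1)) r"]) (auto simp: cpd_free_pos_def)
  qed
qed

definition cpd_anchor_rescale :: "nat \<Rightarrow> nat \<Rightarrow> nat \<Rightarrow> (cpd_idx \<Rightarrow> real) \<Rightarrow> cpd_idx \<Rightarrow> real" where
  "cpd_anchor_rescale I1 I2 I3 y \<tau> = (case \<tau> of
       Lam r \<Rightarrow> inverse (y (FA (I1 - 1) r) * y (FB (I2 - 1) r) * y (FC (I3 - 1) r))
     | FA _ r \<Rightarrow> y (FA (I1 - 1) r) | FB _ r \<Rightarrow> y (FB (I2 - 1) r) | FC _ r \<Rightarrow> y (FC (I3 - 1) r))"

lemma cpd_anchor_rescale_nonzero:
  assumes "\<forall>\<tau>\<in>cpd_anchor_index I1 I2 I3 R. y \<tau> \<noteq> 0" and "\<tau> \<in> cpd_index I1 I2 I3 R"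
  shows "cpd_anchor_rescale I1 I2 I3 y \<tau> \<noteq> 0"
  using assms by (cases \<tau>) (auto simp: cpd_anchor_rescale_def)

lemma merge_cpd_anchor_free:
  fixes R :: nat
  assumes "0 < I1" "0 < I2" "0 < I3"
  defines "F \<equiv> cpd_index I1 I2 I3 R - cpd_anchor_index I1 I2 I3 R"
  shows "merge (cpd_anchor_index I1 I2 I3 R) F
           (y, \<lambda>\<tau>\<in>F. cpd_anchor_rescale I1 I2 I3 y \<tau> * \<theta> (cpd_free_pos I1 I2 \<tau>))
       = cpd_param_of_model I1 I2 I3 R y \<theta>"
proof
  fix \<tau> show "merge (cpd_anchor_index I1 I2 I3 R) F
      (y, \<lambda>\<tau>\<in>F. cpd_anchor_rescale I1 I2 I3 y \<tau> * \<theta> (cpd_free_pos I1 I2 \<tau>)) \<tau>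
    = cpd_param_of_model I1 I2 I3 R y \<theta> \<tau>"
    using assms by (cases \<tau>) (auto simp: F_def merge_def cpd_param_of_model_def
        cpd_anchor_rescale_def cpd_free_pos_def ext1_def divide_inverse)
qed

lemma AE_cpd_param_of_model:
  assumes "0 < I1" "0 < I2" "0 < I3" and "AE p in cpd_measure I1 I2 I3 R. P p"
  obtains y where "\<forall>\<tau>\<in>cpd_anchor_index I1 I2 I3 R. y \<tau> \<noteq> 0"
    and "AE \<theta> in PiM ({..<R} \<times> {..<I1 + I2 + I3 - 2}) (\<lambda>_. lborel).
           P (cpd_param_of_model I1 I2 I3 R y \<theta>)"
proof -
  let ?A = "cpd_anchor_index I1 I2 I3 R"
  let ?F = "cpd_index I1 I2 I3 R - ?A"
  have fin: "finite ?A" "finite ?F" by (auto simp: cpd_anchor_index_def cpd_index_def)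
  have AF: "?A \<union> ?F = cpd_index I1 I2 I3 R"
    using cpd_anchor_index_subset[OF assms(1-3)] by blast
  have ae_union: "AE p in PiM (?A \<union> ?F) (\<lambda>_. lborel). P p"
    unfolding AF using assms(4) by (simp only: cpd_measure_def)
  have "AE y in PiM ?A (\<lambda>_. lborel). AE x in PiM ?F (\<lambda>_. lborel). P (merge ?A ?F (y, x))"
    by (rule AE_PiM_merge[OF sigma_finite_lborel fin _ ae_union]) auto
  with AE_PiM_lborel_nonzero[OF fin(1)]
  have "AE y in PiM ?A (\<lambda>_. lborel). (\<forall>\<tau>\<in>?A. y \<tau> \<noteq> 0)
          \<and> (AE x in PiM ?F (\<lambda>_. lborel). P (merge ?A ?F (y, x)))"
    by eventually_elim auto
  then obtain y where y: "\<forall>\<tau>\<in>?A. y \<tau> \<noteq> 0"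
    and ae: "AE x in PiM ?F (\<lambda>_. lborel). P (merge ?A ?F (y, x))"
    using AE_PiM_lborel_imp_ex[OF fin(1)] by blast
  have "AE \<theta> in PiM ({..<R} \<times> {..<I1 + I2 + I3 - 2}) (\<lambda>_. lborel).
          P (merge ?A ?F (y, \<lambda>\<tau>\<in>?F. cpd_anchor_rescale I1 I2 I3 y \<tau> * \<theta> (cpd_free_pos I1 I2 \<tau>)))"
    using fin(2) bij_betw_cpd_free_pos[OF assms(1-3)] cpd_anchor_rescale_nonzero[OF y] ae
    by (rule AE_PiM_lborel_scale_reindex) auto
  then have "AE \<theta> in PiM ({..<R} \<times> {..<I1 + I2 + I3 - 2}) (\<lambda>_. lborel).
               P (cpd_param_of_model I1 I2 I3 R y \<theta>)"
    unfolding merge_cpd_anchor_free[OF assms(1-3)] .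
  with y show ?thesis by (rule that)
qed

theorem mainTheorem8:
  fixes I1 I2 I3 R :: nat
  assumes "I1 \<ge> 2" and "I2 \<ge> 2" and "I3 \<ge> 2" and "R \<ge> 1"
    and "cpd_generically_unique I1 I2 I3 R"
  shows "additive_identifiable (I1 + I2 + I3 - 2) (I1 * I2 * I3) R (cpd_base_map I1 I2 I3)"
proof -
  \<comment> \<open>The argument only needs \<open>I1, I2, I3 \<ge> 1\<close>.\<close>
  have pos: "0 < I1" "0 < I2" "0 < I3" using assms(1-3) by simp_all
  have "AE p in cpd_measure I1 I2 I3 R. cpd_essentially_unique I1 I2 I3 R p"
    using assms(5) by (simp add: cpd_generically_unique_iff)
  then obtain y where y: "\<forall>\<tau>\<in>cpd_anchor_index I1 I2 I3 R. y \<tau> \<noteq> 0"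
    and ae: "AE \<theta> in PiM ({..<R} \<times> {..<I1 + I2 + I3 - 2}) (\<lambda>_. lborel).
           cpd_essentially_unique I1 I2 I3 R (cpd_param_of_model I1 I2 I3 R y \<theta>)"
    by (rule AE_cpd_param_of_model[OF pos])
  from ae show ?thesis
    unfolding additive_identifiable_iff
    by (rule eventually_mono) (rule additive_unique_at_if_cpd_essentially_unique[OF y])
qed

end
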